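(* Let $z_1,\dots,z_n\in\mathbb D$. Then $$2\pi\sum_{k=1}^n\operatorname{dist}(z_k,\mathbb T)\ \le\ \int_{\mathbb D}\left|\sum_{k=1}^n\frac{1}{z-z_k}\right|dm(z).$$
   Context: $\mathbb D$ is the open unit disc in $\mathbb C$, $\mathbb T$ the unit circle, $\operatorname{dist}(z,\mathbb T)=1-|z|$, and $m$ planar Lebesgue measure. *)

theory Defs
  imports "HOL-Analysis.Analysis"
begin

end

theory Submission
  imports Defs "HOL-Complex_Analysis.Complex_Analysis"
begin

(* In polar coordinates the integral over the disc is the integral over 0 < r < 1 of r times the
   integral of |F| over the circle |z| = r, where F z = (SUM k. 1 / (z - z_k)).  This circle
   integral dominates the modulus of the contour integral of F, which is 2 pi times the number
   of z_k inside the circle, and integrating that count over 0 < r < 1 gives SUM k. 1 - |z_k|.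
   Polar coordinates are derived from Fubini's theorem and the substitution x = y cot theta on
   each horizontal line Im z = y > 0. *)

lemma borel_measurable_Complex [measurable]:
  fixes f g :: "'a \<Rightarrow> real"
  assumes [measurable]: "f \<in> borel_measurable M" "g \<in> borel_measurable M"
  shows "(\<lambda>x. Complex (f x) (g x)) \<in> borel_measurable M"
  unfolding Complex_eq by measurable

lemma borel_measurable_rcis [measurable]:
  fixes f g :: "'a \<Rightarrow> real"
  assumes [measurable]: "f \<in> borel_measurable M" "g \<in> borel_measurable M"
  shows "(\<lambda>x. rcis (f x) (g x)) \<in> borel_measurable M"
  unfolding rcis_def cis.ctr by measurable

lemma lborel_complex_eq_distr_pair:
  "(lborel :: complex measure) = distr (lborel \<Otimes>\<^sub>M lborel) borel (\<lambda>(x, y). Complex x y)"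
proof (rule lborel_eqI)
  fix l u :: complex
  assume le: "\<And>b. b \<in> Basis \<Longrightarrow> l \<bullet> b \<le> u \<bullet> b"
  have "Re l \<le> Re u" "Im l \<le> Im u"
    using le[of 1] le[of \<i>] by (auto simp: Basis_complex_def)
  moreover have "(\<lambda>(x, y). Complex x y) -` box l u \<inter> space (lborel \<Otimes>\<^sub>M lborel)
      = {Re l<..<Re u} \<times> {Im l<..<Im u}"
    by (auto simp: box_def Basis_complex_def space_pair_measure)
  ultimately show "emeasure (distr (lborel \<Otimes>\<^sub>M lborel) borel (\<lambda>(x, y). Complex x y)) (box l u)
      = (\<Prod>b\<in>Basis. (u - l) \<bullet> b)"
    by (simp add: emeasure_distr case_prod_unfold lborel.emeasure_pair_measure_Times
        Basis_complex_def ennreal_mult')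
qed (simp add: case_prod_unfold)

lemma nn_integral_lborel_complex:
  fixes h :: "complex \<Rightarrow> ennreal"
  assumes [measurable]: "h \<in> borel_measurable borel"
  shows "(\<integral>\<^sup>+z. h z \<partial>lborel) = (\<integral>\<^sup>+y. \<integral>\<^sup>+x. h (Complex x y) \<partial>lborel \<partial>lborel)"
  by (subst lborel_complex_eq_distr_pair, subst nn_integral_distr)
     (simp_all add: case_prod_unfold lborel_pair.nn_integral_snd[symmetric])

lemma open_interval_exhausting_sequences:
  fixes a b :: real
  assumes "a < b"
  obtains u v :: "nat \<Rightarrow> real"
  where "\<And>k. a < u k" "\<And>k. u k < v k" "\<And>k. v k < b"
    and "\<And>k. u (Suc k) \<le> u k" "\<And>k. v k \<le> v (Suc k)"
    and "u \<longlonglongrightarrow> a" "v \<longlonglongrightarrow> b"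
proof
  define d where "d k = (b - a) / real (k + 3)" for k :: nat
  have d_pos: "0 < d k" for k
    using \<open>a < b\<close> by (simp add: d_def)
  have d_small: "d k < (b - a) / 2" for k
    unfolding d_def using \<open>a < b\<close> by (intro divide_strict_left_mono) auto
  show "a < a + d k" "a + d k < b - d k" "b - d k < b" for k
    using d_pos[of k] d_small[of k] by auto
  show "a + d (Suc k) \<le> a + d k" "b - d k \<le> b - d (Suc k)" for k
    using \<open>a < b\<close> by (auto simp: d_def intro!: divide_left_mono)
  have "d \<longlonglongrightarrow> 0"
    unfolding d_def by (rule LIMSEQ_ignore_initial_segment[OF lim_const_over_n])
  then show "(\<lambda>k. a + d k) \<longlonglongrightarrow> a" "(\<lambda>k. b - d k) \<longlonglongrightarrow> b"
    using tendsto_add[of "\<lambda>_. a"] tendsto_diff[of "\<lambda>_. b"] by force+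
qed

lemma tendsto_set_nn_integral_exhaustion:
  fixes f :: "'a \<Rightarrow> ennreal" and A :: "nat \<Rightarrow> 'a set"
  assumes [measurable]: "(\<lambda>x. f x * indicator S x) \<in> borel_measurable M" "\<And>k. A k \<in> sets M"
    and sub: "\<And>k. A k \<subseteq> S" and inc: "\<And>k. A k \<subseteq> A (Suc k)"
    and exhaust: "\<And>x. x \<in> S \<Longrightarrow> eventually (\<lambda>k. x \<in> A k) sequentially"
  shows "(\<lambda>k. \<integral>\<^sup>+x \<in> A k. f x \<partial>M) \<longlonglongrightarrow> (\<integral>\<^sup>+x \<in> S. f x \<partial>M)"
proof (rule nn_integral_LIMSEQ)
  fix k
  have "(\<lambda>x. f x * indicator S x * indicator (A k) x) \<in> borel_measurable M"
    by measurable
  moreover have "f x * indicator S x * indicator (A k) x = f x * indicator (A k) x" for x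
    using sub[of k] by (auto simp: indicator_def)
  ultimately show "(\<lambda>x. f x * indicator (A k) x) \<in> borel_measurable M"
    by simp
next
  show "incseq (\<lambda>k x. f x * indicator (A k) x)"
    using inc by (intro incseq_SucI le_funI mult_left_mono) (auto simp: indicator_def)
next
  fix x
  show "(\<lambda>k. f x * indicator (A k) x) \<longlonglongrightarrow> f x * indicator S x"
  proof (cases "x \<in> S")
    case True
    then show ?thesis
      using exhaust[OF True] by (intro tendsto_eventually) (auto elim!: eventually_mono)
  next
    case False
    then have "x \<notin> A k" for k
      using sub by auto
    with False show ?thesis
      by simp
  qed
qed

lemma DERIV_nonneg_imp_mono_on:
  fixes g g' :: "real \<Rightarrow> real"
  assumes deriv: "\<And>x. x \<in> {a<..<b} \<Longrightarrow> (g has_real_derivative g' x) (at x)"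
    and nonneg: "\<And>x. x \<in> {a<..<b} \<Longrightarrow> 0 \<le> g' x"
  shows "mono_on {a<..<b} g"
proof (rule mono_onI)
  fix x y assume "x \<in> {a<..<b}" "y \<in> {a<..<b}" "x \<le> y"
  then show "g x \<le> g y"
  proof (intro DERIV_nonneg_imp_increasing_open[OF \<open>x \<le> y\<close>])
    show "\<exists>d. (g has_real_derivative d) (at t) \<and> 0 \<le> d" if "x < t" "t < y" for t
      using that \<open>x \<in> _\<close> \<open>y \<in> _\<close> deriv nonneg by force
    show "continuous_on {x..y} g"
      using \<open>x \<in> _\<close> \<open>y \<in> _\<close>
      by (intro has_real_derivative_imp_continuous_on[where f'=g'] deriv) auto
  qed
qed

lemma nn_integral_substitution_open_interval:
  fixes f :: "real \<Rightarrow> ennreal" and g g' :: "real \<Rightarrow> real" and a b :: real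
  assumes f [measurable]: "f \<in> borel_measurable borel"
    and deriv: "\<And>x. x \<in> {a<..<b} \<Longrightarrow> (g has_real_derivative g' x) (at x)"
    and cont: "continuous_on {a<..<b} g'"
    and nonneg: "\<And>x. x \<in> {a<..<b} \<Longrightarrow> 0 \<le> g' x"
    and bot: "filterlim g at_bot (at_right a)" and top: "filterlim g at_top (at_left b)"
    and "a < b"
  shows "(\<integral>\<^sup>+x. f x \<partial>lborel) = (\<integral>\<^sup>+x \<in> {a<..<b}. f (g x) * g' x \<partial>lborel)"
proof -
  \<comment> \<open>Exhaust \<open>{a<..<b}\<close> by intervals \<open>{u k..v k}\<close>; their images under \<open>g\<close> exhaust the real line.\<close>
  obtain u v where uv: "\<And>k. a < u k" "\<And>k. u k < v k" "\<And>k. v k < b"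
    and mono: "\<And>k. u (Suc k) \<le> u k" "\<And>k. v k \<le> v (Suc k)"
    and lim: "u \<longlonglongrightarrow> a" "v \<longlonglongrightarrow> b"
    using open_interval_exhausting_sequences[OF \<open>a < b\<close>] by blast
  have g_mono: "g x \<le> g y" if "a < x" "x \<le> y" "y < b" for x y
    using mono_onD[OF DERIV_nonneg_imp_mono_on[OF deriv nonneg]] that by auto
  have "(\<lambda>x. f (g x) * ennreal (g' x)) \<in> borel_measurable (restrict_space borel {a<..<b})"
    using has_real_derivative_imp_continuous_on[OF deriv] cont
    by (intro borel_measurable_times_ennreal measurable_compose[OF _ f]
        measurable_compose[OF _ measurable_ennreal] borel_measurable_continuous_on_restrict)
  then have "(\<lambda>x. f (g x) * g' x * indicator {a<..<b} x) \<in> borel_measurable lborel"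
    by (simp add: borel_measurable_restrict_space_iff_ennreal)
  then have "(\<lambda>k. \<integral>\<^sup>+x \<in> {u k..v k}. f (g x) * g' x \<partial>lborel)
      \<longlonglongrightarrow> (\<integral>\<^sup>+x \<in> {a<..<b}. f (g x) * g' x \<partial>lborel)"
  proof (rule tendsto_set_nn_integral_exhaustion)
    show "{u k..v k} \<subseteq> {a<..<b}" for k
      using uv(1)[of k] uv(3)[of k] by auto
    show "{u k..v k} \<subseteq> {u (Suc k)..v (Suc k)}" for k
      using mono[of k] by auto
    show "eventually (\<lambda>k. x \<in> {u k..v k}) sequentially" if "x \<in> {a<..<b}" for x
      using that order_tendstoD(2)[OF lim(1), of x] order_tendstoD(1)[OF lim(2), of x]
      by (auto elim: eventually_elim2)
  qed simp_all
  moreover have "(\<lambda>k. \<integral>\<^sup>+x \<in> {u k..v k}. f (g x) * g' x \<partial>lborel)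
      = (\<lambda>k. \<integral>\<^sup>+x \<in> {g (u k)..g (v k)}. f x \<partial>lborel)"
  proof (intro ext nn_integral_substitution_aux[symmetric])
    fix k
    have sub: "{u k..v k} \<subseteq> {a<..<b}"
      using uv(1)[of k] uv(3)[of k] by auto
    then show "continuous_on {u k..v k} g'"
      by (rule continuous_on_subset[OF cont])
    show "(g has_real_derivative g' x) (at x)" "0 \<le> g' x" if "x \<in> {u k..v k}" for x
      using that sub deriv nonneg by auto
  qed (simp_all add: uv(2))
  moreover have "(\<lambda>k. \<integral>\<^sup>+x \<in> {g (u k)..g (v k)}. f x \<partial>lborel) \<longlonglongrightarrow> (\<integral>\<^sup>+x \<in> UNIV. f x \<partial>lborel)"
  proof (rule tendsto_set_nn_integral_exhaustion)
    show "{g (u k)..g (v k)} \<subseteq> {g (u (Suc k))..g (v (Suc k))}" for k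
      using g_mono[OF uv(1) mono(1) less_trans[OF uv(2,3)]]
        g_mono[OF less_trans[OF uv(1,2)] mono(2) uv(3)] by auto
    have "filterlim u (at_right a) sequentially" "filterlim v (at_left b) sequentially"
      using lim uv
      by (auto intro!: tendsto_imp_filterlim_at_right tendsto_imp_filterlim_at_left
          always_eventually)
    then have "filterlim (\<lambda>k. g (u k)) at_bot sequentially"
        "filterlim (\<lambda>k. g (v k)) at_top sequentially"
      by (auto intro: filterlim_compose[OF bot] filterlim_compose[OF top])
    then show "eventually (\<lambda>k. x \<in> {g (u k)..g (v k)}) sequentially" for x
      by (auto simp: filterlim_at_bot filterlim_at_top intro: eventually_conj)
  qed simp_all
  ultimately show ?thesis
    using LIMSEQ_unique by simp
qed

lemma filterlim_cot_at_right_0: "filterlim cot at_top (at_right (0::real))"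
proof -
  have "(cos \<longlongrightarrow> cos 0) (at_right (0::real))" "(sin \<longlongrightarrow> sin 0) (at_right (0::real))"
    by (intro tendsto_intros)+
  moreover have "eventually (\<lambda>\<theta>. 0 < sin \<theta>) (at_right (0::real))"
    unfolding eventually_at_right_field by (intro exI[of _ pi]) (auto intro: sin_gt_zero)
  ultimately show ?thesis
    unfolding cot_def by (intro LIM_at_top_divide[where a=1]) simp_all
qed

lemma filterlim_cot_at_left_pi: "filterlim cot at_bot (at_left pi)"
proof -
  have "((\<lambda>\<theta>. - cos \<theta>) \<longlongrightarrow> - cos pi) (at_left pi)" "(sin \<longlongrightarrow> sin pi) (at_left pi)"
    by (intro tendsto_intros)+
  moreover have "eventually (\<lambda>\<theta>. 0 < sin \<theta>) (at_left pi)"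
    unfolding eventually_at_left_field by (intro exI[of _ 0]) (auto intro: sin_gt_zero)
  ultimately have "filterlim (\<lambda>\<theta>. - cos \<theta> / sin \<theta>) at_top (at_left pi)"
    by (intro LIM_at_top_divide[where a=1]) simp_all
  then show ?thesis
    by (simp add: cot_def filterlim_uminus_at_top)
qed

lemma nn_integral_horizontal_line_by_angle:
  fixes h :: "complex \<Rightarrow> ennreal" and y :: real
  assumes [measurable]: "h \<in> borel_measurable borel" and "0 < y"
  shows "(\<integral>\<^sup>+x. h (Complex x y) \<partial>lborel)
    = (\<integral>\<^sup>+\<theta> \<in> {0<..<pi}. h (rcis (y / sin \<theta>) \<theta>) * ennreal (y / (sin \<theta>)\<^sup>2) \<partial>lborel)"
proof -
  have sin_pos: "0 < sin \<theta>" if "\<theta> \<in> {0<..<pi}" for \<theta>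
    using that by (auto intro: sin_gt_zero)
  have "(\<integral>\<^sup>+x. h (Complex x y) \<partial>lborel) = (\<integral>\<^sup>+x. h (Complex (- x) y) \<partial>lborel)"
    using nn_integral_real_affine[of "\<lambda>x. h (Complex x y)" "-1" 0] by simp
  also have "\<dots> = (\<integral>\<^sup>+\<theta> \<in> {0<..<pi}. h (Complex (y * cot \<theta>) y) * ennreal (y / (sin \<theta>)\<^sup>2) \<partial>lborel)"
  proof (subst nn_integral_substitution_open_interval[where g="\<lambda>\<theta>. - (y * cot \<theta>)"])
    show "((\<lambda>\<theta>. - (y * cot \<theta>)) has_real_derivative y / (sin \<theta>)\<^sup>2) (at \<theta>)"
      if "\<theta> \<in> {0<..<pi}" for \<theta>
      using DERIV_cmult[OF DERIV_cot, of \<theta> "- y"] sin_pos[OF that] by (simp add: divide_inverse)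
    show "continuous_on {0<..<pi} (\<lambda>\<theta>. y / (sin \<theta>)\<^sup>2)"
      by (intro continuous_intros) (auto dest!: sin_pos)
    show "filterlim (\<lambda>\<theta>. - (y * cot \<theta>)) at_bot (at_right 0)"
      using \<open>0 < y\<close> by (auto simp: filterlim_uminus_at_bot intro!: filterlim_tendsto_pos_mult_at_top
          filterlim_cot_at_right_0)
    show "filterlim (\<lambda>\<theta>. - (y * cot \<theta>)) at_top (at_left pi)"
      using \<open>0 < y\<close> by (auto simp: filterlim_uminus_at_top intro!: filterlim_tendsto_pos_mult_at_bot
          filterlim_cot_at_left_pi)
  qed (use \<open>0 < y\<close> in auto)
  also have "\<dots> = (\<integral>\<^sup>+\<theta> \<in> {0<..<pi}. h (rcis (y / sin \<theta>) \<theta>) * ennreal (y / (sin \<theta>)\<^sup>2) \<partial>lborel)"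
  proof -
    have "Complex (y * cot \<theta>) y = rcis (y / sin \<theta>) \<theta>" if "\<theta> \<in> {0<..<pi}" for \<theta>
      using sin_pos[OF that] by (simp add: complex_eq_iff cot_def field_simps)
    then show ?thesis
      by (intro nn_integral_cong) (simp add: indicator_def)
  qed
  finally show ?thesis .
qed

lemma nn_integral_upper_half_plane_polar:
  fixes h :: "complex \<Rightarrow> ennreal"
  assumes [measurable]: "h \<in> borel_measurable borel"
  shows "(\<integral>\<^sup>+y \<in> {0<..}. (\<integral>\<^sup>+x. h (Complex x y) \<partial>lborel) \<partial>lborel)
    = (\<integral>\<^sup>+\<theta> \<in> {0<..<pi}. (\<integral>\<^sup>+r \<in> {0<..}. ennreal r * h (rcis r \<theta>) \<partial>lborel) \<partial>lborel)"
proof -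
  define F where "F \<theta> y = h (rcis (y / sin \<theta>) \<theta>) * ennreal (y / (sin \<theta>)\<^sup>2)
    * indicator {0<..<pi} \<theta> * indicator {0<..} y" for \<theta> y
  have "(\<integral>\<^sup>+y \<in> {0<..}. (\<integral>\<^sup>+x. h (Complex x y) \<partial>lborel) \<partial>lborel)
      = (\<integral>\<^sup>+y. \<integral>\<^sup>+\<theta>. F \<theta> y \<partial>lborel \<partial>lborel)"
  proof (intro nn_integral_cong)
    fix y :: real
    show "(\<integral>\<^sup>+x. h (Complex x y) \<partial>lborel) * indicator {0<..} y = (\<integral>\<^sup>+\<theta>. F \<theta> y \<partial>lborel)"
    proof (cases "0 < y")
      case True
      have "(\<lambda>\<theta>. h (rcis (y / sin \<theta>) \<theta>) * ennreal (y / (sin \<theta>)\<^sup>2) * indicator {0<..<pi} \<theta>)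
          \<in> borel_measurable borel"
        by measurable
      with True show ?thesis
        by (simp add: F_def nn_integral_horizontal_line_by_angle nn_integral_multc)
    qed (simp add: F_def)
  qed
  also have "\<dots> = (\<integral>\<^sup>+\<theta>. \<integral>\<^sup>+y. F \<theta> y \<partial>lborel \<partial>lborel)"
  proof (rule lborel_pair.Fubini')
    show "(\<lambda>(\<theta>, y). F \<theta> y) \<in> borel_measurable (lborel \<Otimes>\<^sub>M lborel)"
      unfolding F_def by measurable
  qed
  also have "\<dots> = (\<integral>\<^sup>+\<theta> \<in> {0<..<pi}. (\<integral>\<^sup>+r \<in> {0<..}. ennreal r * h (rcis r \<theta>) \<partial>lborel) \<partial>lborel)"
  proof (intro nn_integral_cong)
    fix \<theta> :: real
    show "(\<integral>\<^sup>+y. F \<theta> y \<partial>lborel)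
      = (\<integral>\<^sup>+r \<in> {0<..}. ennreal r * h (rcis r \<theta>) \<partial>lborel) * indicator {0<..<pi} \<theta>"
    proof (cases "\<theta> \<in> {0<..<pi}")
      case True
      then have sin_pos: "0 < sin \<theta>"
        by (auto intro: sin_gt_zero)
      have F_scaled: "ennreal (sin \<theta>) * F \<theta> (sin \<theta> * r)
          = ennreal r * h (rcis r \<theta>) * indicator {0<..} r" for r
      proof (cases "0 < r")
        case r_pos: True
        have "sin \<theta> * r / (sin \<theta>)\<^sup>2 = r / sin \<theta>"
          using sin_pos by (simp add: field_simps power2_eq_square)
        then have "ennreal (sin \<theta>) * F \<theta> (sin \<theta> * r)
            = ennreal (sin \<theta>) * ennreal (r / sin \<theta>) * h (rcis r \<theta>)"
          using sin_pos True r_pos by (simp add: F_def mult_ac)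
        also have "\<dots> = ennreal r * h (rcis r \<theta>)"
          using sin_pos r_pos by (simp flip: ennreal_mult')
        finally show ?thesis
          using r_pos by simp
      qed (use sin_pos in \<open>simp add: F_def zero_less_mult_iff\<close>)
      have [measurable]: "F \<theta> \<in> borel_measurable borel"
        unfolding F_def by measurable
      have "(\<integral>\<^sup>+y. F \<theta> y \<partial>lborel) = ennreal (sin \<theta>) * (\<integral>\<^sup>+r. F \<theta> (sin \<theta> * r) \<partial>lborel)"
        using nn_integral_real_affine[of "F \<theta>" "sin \<theta>" 0] sin_pos by simp
      also have "\<dots> = (\<integral>\<^sup>+r. ennreal (sin \<theta>) * F \<theta> (sin \<theta> * r) \<partial>lborel)"
        by (rule nn_integral_cmult[symmetric]) measurable
      also have "\<dots> = (\<integral>\<^sup>+r \<in> {0<..}. ennreal r * h (rcis r \<theta>) \<partial>lborel)"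
        by (simp add: F_scaled)
      finally show ?thesis
        using True by simp
    qed (simp add: F_def)
  qed
  finally show ?thesis .
qed

lemma nn_integral_lower_half_plane_polar:
  fixes h :: "complex \<Rightarrow> ennreal"
  assumes [measurable]: "h \<in> borel_measurable borel"
  shows "(\<integral>\<^sup>+y \<in> {..<0}. (\<integral>\<^sup>+x. h (Complex x y) \<partial>lborel) \<partial>lborel)
    = (\<integral>\<^sup>+\<theta> \<in> {pi<..<2*pi}. (\<integral>\<^sup>+r \<in> {0<..}. ennreal r * h (rcis r \<theta>) \<partial>lborel) \<partial>lborel)"
proof -
  define I where "I y = (\<integral>\<^sup>+x. h (Complex x y) \<partial>lborel)" for y
  define \<Phi> where "\<Phi> \<theta> = (\<integral>\<^sup>+r \<in> {0<..}. ennreal r * h (rcis r \<theta>) \<partial>lborel)" for \<theta>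
  have [measurable]: "I \<in> borel_measurable borel" "\<Phi> \<in> borel_measurable borel"
    unfolding I_def \<Phi>_def by measurable
  have "(\<integral>\<^sup>+y \<in> {..<0}. I y \<partial>lborel) = (\<integral>\<^sup>+y \<in> {0<..}. I (- y) \<partial>lborel)"
    using nn_integral_real_affine[of "\<lambda>y. I y * indicator {..<0} y" "-1" 0]
    by (simp add: indicator_def)
  also have "\<dots> = (\<integral>\<^sup>+y \<in> {0<..}. (\<integral>\<^sup>+x. h (- Complex x y) \<partial>lborel) \<partial>lborel)"
  proof -
    have "- Complex x y = Complex (- x) (- y)" for x y
      by (simp add: complex_eq_iff)
    then have "I (- y) = (\<integral>\<^sup>+x. h (- Complex x y) \<partial>lborel)" for y
      unfolding I_def using nn_integral_real_affine[of "\<lambda>x. h (Complex x (- y))" "-1" 0] by simp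
    then show ?thesis
      by simp
  qed
  also have "\<dots> = (\<integral>\<^sup>+\<theta> \<in> {0<..<pi}. \<Phi> (\<theta> + pi) \<partial>lborel)"
  proof -
    have "rcis r (\<theta> + pi) = - rcis r \<theta>" for r \<theta>
      by (simp add: rcis_def cis.ctr complex_eq_iff)
    then show ?thesis
      by (subst nn_integral_upper_half_plane_polar) (simp_all add: \<Phi>_def)
  qed
  also have "\<dots> = (\<integral>\<^sup>+\<theta> \<in> {pi<..<2*pi}. \<Phi> \<theta> \<partial>lborel)"
    using nn_integral_real_affine[of "\<lambda>\<theta>. \<Phi> \<theta> * indicator {pi<..<2*pi} \<theta>" 1 pi]
    by (simp add: indicator_def add.commute)
  finally show ?thesis
    unfolding I_def \<Phi>_def .
qed

lemma nn_integral_lborel_polar: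
  fixes h :: "complex \<Rightarrow> ennreal"
  assumes [measurable]: "h \<in> borel_measurable borel"
  shows "(\<integral>\<^sup>+z. h z \<partial>lborel)
    = (\<integral>\<^sup>+r \<in> {0<..}. ennreal r * (\<integral>\<^sup>+\<theta> \<in> {0..2*pi}. h (rcis r \<theta>) \<partial>lborel) \<partial>lborel)"
proof -
  define I where "I y = (\<integral>\<^sup>+x. h (Complex x y) \<partial>lborel)" for y
  define \<Phi> where "\<Phi> \<theta> = (\<integral>\<^sup>+r \<in> {0<..}. ennreal r * h (rcis r \<theta>) \<partial>lborel)" for \<theta>
  have [measurable]: "I \<in> borel_measurable borel" "\<Phi> \<in> borel_measurable borel"
    unfolding I_def \<Phi>_def by measurable
  have upper: "(\<integral>\<^sup>+y \<in> {0<..}. I y \<partial>lborel) = (\<integral>\<^sup>+\<theta> \<in> {0<..<pi}. \<Phi> \<theta> \<partial>lborel)"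
    unfolding I_def \<Phi>_def by (rule nn_integral_upper_half_plane_polar) measurable
  have lower: "(\<integral>\<^sup>+y \<in> {..<0}. I y \<partial>lborel) = (\<integral>\<^sup>+\<theta> \<in> {pi<..<2*pi}. \<Phi> \<theta> \<partial>lborel)"
    unfolding I_def \<Phi>_def by (rule nn_integral_lower_half_plane_polar) measurable
  have "(\<integral>\<^sup>+z. h z \<partial>lborel) = (\<integral>\<^sup>+y \<in> {0<..} \<union> {..<0}. I y \<partial>lborel)"
    unfolding nn_integral_lborel_complex[OF assms] I_def[symmetric]
    by (intro nn_integral_cong_AE eventually_mono[OF AE_lborel_singleton[of 0]])
       (auto simp: indicator_def)
  also have "\<dots> = (\<integral>\<^sup>+y \<in> {0<..}. I y \<partial>lborel) + (\<integral>\<^sup>+y \<in> {..<0}. I y \<partial>lborel)"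
    by (rule nn_integral_disjoint_pair) auto
  also have "\<dots> = (\<integral>\<^sup>+\<theta> \<in> {0<..<pi}. \<Phi> \<theta> \<partial>lborel) + (\<integral>\<^sup>+\<theta> \<in> {pi<..<2*pi}. \<Phi> \<theta> \<partial>lborel)"
    by (simp only: upper lower)
  also have "\<dots> = (\<integral>\<^sup>+\<theta> \<in> {0<..<pi} \<union> {pi<..<2*pi}. \<Phi> \<theta> \<partial>lborel)"
    by (rule nn_integral_disjoint_pair[symmetric]) auto
  also have "\<dots> = (\<integral>\<^sup>+\<theta> \<in> {0..2*pi}. \<Phi> \<theta> \<partial>lborel)"
  proof (rule nn_integral_null_delta)
    have "({0<..<pi} \<union> {pi<..<2*pi} - {0..2*pi}) \<union> ({0..2*pi} - ({0<..<pi} \<union> {pi<..<2*pi}))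
        = {0, pi, 2*pi}"
      using pi_gt_zero by auto
    then show "({0<..<pi} \<union> {pi<..<2*pi} - {0..2*pi}) \<union> ({0..2*pi} - ({0<..<pi} \<union> {pi<..<2*pi}))
        \<in> null_sets lborel"
      by (simp add: finite_imp_null_set_lborel)
  qed auto
  also have "\<dots> = (\<integral>\<^sup>+\<theta>. \<integral>\<^sup>+r. ennreal r * h (rcis r \<theta>)
      * indicator {0<..} r * indicator {0..2*pi} \<theta> \<partial>lborel \<partial>lborel)"
    by (simp add: \<Phi>_def nn_integral_multc)
  also have "\<dots> = (\<integral>\<^sup>+r. \<integral>\<^sup>+\<theta>. ennreal r * h (rcis r \<theta>)
      * indicator {0<..} r * indicator {0..2*pi} \<theta> \<partial>lborel \<partial>lborel)"
    by (rule lborel_pair.Fubini'[symmetric]) measurable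
  also have "\<dots> = (\<integral>\<^sup>+r \<in> {0<..}. ennreal r * (\<integral>\<^sup>+\<theta> \<in> {0..2*pi}. h (rcis r \<theta>) \<partial>lborel) \<partial>lborel)"
    by (intro nn_integral_cong) (simp add: nn_integral_cmult[symmetric] mult_ac)
  finally show ?thesis .
qed

lemma nn_integral_ball_polar:
  fixes f :: "complex \<Rightarrow> ennreal"
  assumes [measurable]: "f \<in> borel_measurable borel"
  shows "(\<integral>\<^sup>+z \<in> ball 0 R. f z \<partial>lborel)
    = (\<integral>\<^sup>+r \<in> {0<..<R}. ennreal r * (\<integral>\<^sup>+\<theta> \<in> {0..2*pi}. f (rcis r \<theta>) \<partial>lborel) \<partial>lborel)"
proof -
  have [measurable]: "ball (0::complex) R \<in> sets borel"
    by simp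
  have "(\<integral>\<^sup>+z \<in> ball 0 R. f z \<partial>lborel) = (\<integral>\<^sup>+r \<in> {0<..}. ennreal r *
      (\<integral>\<^sup>+\<theta> \<in> {0..2*pi}. f (rcis r \<theta>) * indicator (ball 0 R) (rcis r \<theta>) \<partial>lborel) \<partial>lborel)"
    by (rule nn_integral_lborel_polar) measurable
  also have "\<dots> = (\<integral>\<^sup>+r \<in> {0<..<R}. ennreal r * (\<integral>\<^sup>+\<theta> \<in> {0..2*pi}. f (rcis r \<theta>) \<partial>lborel) \<partial>lborel)"
    by (intro nn_integral_cong) (auto simp: indicator_def)
  finally show ?thesis .
qed

lemma norm_contour_integral_circlepath_le_nn_integral:
  fixes f :: "complex \<Rightarrow> complex" and r :: real
  assumes "0 < r" and cont: "continuous_on (sphere 0 r) f"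
  shows "ennreal (norm (contour_integral (circlepath 0 r) f))
    \<le> ennreal r * (\<integral>\<^sup>+\<theta> \<in> {0..2*pi}. ennreal (norm (f (rcis r \<theta>))) \<partial>lborel)"
proof -
  have cont_circle: "continuous_on {0..2*pi} (\<lambda>\<theta>. f (rcis r \<theta>))"
    using \<open>0 < r\<close> by (intro continuous_on_compose2[OF cont] continuous_intros) auto
  have "contour_integral (circlepath 0 r) f = integral {0..2*pi} (\<lambda>\<theta>. f (rcis r \<theta>) * r * \<i> * cis \<theta>)"
    by (simp add: circlepath_def contour_integral_part_circlepath_eq rcis_def)
  also have "norm \<dots> \<le> integral {0..2*pi} (\<lambda>\<theta>. r * norm (f (rcis r \<theta>)))"
    using \<open>0 < r\<close>
    by (intro integral_norm_bound_integral integrable_continuous_interval continuous_intros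
        cont_circle)
       (auto simp: norm_mult)
  finally have "norm (contour_integral (circlepath 0 r) f)
      \<le> r * integral {0..2*pi} (\<lambda>\<theta>. norm (f (rcis r \<theta>)))"
    by simp
  moreover have "(\<integral>\<^sup>+\<theta> \<in> {0..2*pi}. ennreal (norm (f (rcis r \<theta>))) \<partial>lborel)
      = ennreal (integral {0..2*pi} (\<lambda>\<theta>. norm (f (rcis r \<theta>))))"
    by (intro nn_integral_has_integral_lebesgue' integrable_integral integrable_continuous_interval
        continuous_intros cont_circle) auto
  ultimately show ?thesis
    using \<open>0 < r\<close> by (simp add: ennreal_leI flip: ennreal_mult')
qed

lemma contour_integral_circlepath_sum_inverse:
  fixes a :: "'i \<Rightarrow> complex"
  assumes "finite A" and "0 < r" and not_on_circle: "\<And>k. k \<in> A \<Longrightarrow> norm (a k) \<noteq> r"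
  shows "contour_integral (circlepath 0 r) (\<lambda>z. \<Sum>k\<in>A. 1 / (z - a k))
    = 2 * pi * \<i> * card {k \<in> A. norm (a k) < r}"
proof -
  have winding: "winding_number (circlepath 0 r) (a k) = of_bool (norm (a k) < r)" if "k \<in> A" for k
  proof (cases "norm (a k) < r")
    case True
    then show ?thesis
      by (simp add: winding_number_circlepath)
  next
    case False
    then have "a k \<notin> cball 0 r"
      using not_on_circle[OF that] by auto
    with False \<open>0 < r\<close> show ?thesis
      by (auto intro: winding_number_zero_outside[where s="cball 0 r"])
  qed
  have "((\<lambda>z. \<Sum>k\<in>A. 1 / (z - a k)) has_contour_integral
      (\<Sum>k\<in>A. 2 * pi * \<i> * winding_number (circlepath 0 r) (a k))) (circlepath 0 r)"
    using \<open>finite A\<close> \<open>0 < r\<close> not_on_circle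
    by (intro has_contour_integral_sum has_contour_integral_winding_number) auto
  moreover have "(\<Sum>k\<in>A. 2 * pi * \<i> * winding_number (circlepath 0 r) (a k))
      = 2 * pi * \<i> * card {k \<in> A. norm (a k) < r}"
    using \<open>finite A\<close> by (simp add: winding sum_distrib_left[symmetric] Int_def conj_commute)
  ultimately show ?thesis
    by (simp add: contour_integral_unique)
qed

lemma card_inside_circle_le_nn_integral_on_circle:
  fixes a :: "'i \<Rightarrow> complex"
  assumes "finite A" and "0 < r" and not_on_circle: "\<And>k. k \<in> A \<Longrightarrow> norm (a k) \<noteq> r"
  shows "ennreal (2 * pi * card {k \<in> A. norm (a k) < r})
    \<le> ennreal r * (\<integral>\<^sup>+\<theta> \<in> {0..2*pi}. ennreal (norm (\<Sum>k\<in>A. 1 / (rcis r \<theta> - a k))) \<partial>lborel)"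
proof -
  have "continuous_on (sphere 0 r) (\<lambda>z. \<Sum>k\<in>A. 1 / (z - a k))"
    using not_on_circle by (intro continuous_intros) auto
  with assms show ?thesis
    using norm_contour_integral_circlepath_le_nn_integral[of r "\<lambda>z. \<Sum>k\<in>A. 1 / (z - a k)"]
    by (simp add: contour_integral_circlepath_sum_inverse norm_mult)
qed

lemma nn_integral_card_inside_circle_le:
  fixes a :: "'i \<Rightarrow> complex"
  assumes "finite A"
  shows "(\<integral>\<^sup>+r \<in> {0<..<R}. ennreal (2 * pi * card {k \<in> A. norm (a k) < r}) \<partial>lborel)
    \<le> (\<integral>\<^sup>+r \<in> {0<..<R}. ennreal r *
          (\<integral>\<^sup>+\<theta> \<in> {0..2*pi}. ennreal (norm (\<Sum>k\<in>A. 1 / (rcis r \<theta> - a k))) \<partial>lborel) \<partial>lborel)"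
proof (rule nn_integral_mono_AE)
  have "AE r in lborel. r \<notin> (\<lambda>k. norm (a k)) ` A"
    using \<open>finite A\<close> by (intro AE_not_in finite_imp_null_set_lborel) auto
  then show "AE r in lborel. ennreal (2 * pi * card {k \<in> A. norm (a k) < r}) * indicator {0<..<R} r
      \<le> ennreal r * (\<integral>\<^sup>+\<theta> \<in> {0..2*pi}. ennreal (norm (\<Sum>k\<in>A. 1 / (rcis r \<theta> - a k))) \<partial>lborel)
        * indicator {0<..<R} r"
  proof (rule eventually_mono)
    fix r assume "r \<notin> (\<lambda>k. norm (a k)) ` A"
    then have "ennreal (2 * pi * card {k \<in> A. norm (a k) < r})
        \<le> ennreal r * (\<integral>\<^sup>+\<theta> \<in> {0..2*pi}. ennreal (norm (\<Sum>k\<in>A. 1 / (rcis r \<theta> - a k))) \<partial>lborel)"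
      if "r \<in> {0<..<R}"
      using \<open>finite A\<close> that by (intro card_inside_circle_le_nn_integral_on_circle) auto
    then show "ennreal (2 * pi * card {k \<in> A. norm (a k) < r}) * indicator {0<..<R} r
        \<le> ennreal r * (\<integral>\<^sup>+\<theta> \<in> {0..2*pi}. ennreal (norm (\<Sum>k\<in>A. 1 / (rcis r \<theta> - a k))) \<partial>lborel)
          * indicator {0<..<R} r"
      by (cases "r \<in> {0<..<R}") simp_all
  qed
qed

lemma nn_integral_card_less:
  fixes a :: "'i \<Rightarrow> real"
  assumes "finite A" and range: "\<And>k. k \<in> A \<Longrightarrow> c \<le> a k \<and> a k \<le> d"
  shows "(\<integral>\<^sup>+r \<in> {c<..<d}. of_nat (card {k \<in> A. a k < r}) \<partial>lborel) = ennreal (\<Sum>k\<in>A. d - a k)"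
proof -
  have "of_nat (card {k \<in> A. a k < r}) * indicator {c<..<d} r
      = (\<Sum>k\<in>A. indicator {a k<..<d} r :: ennreal)" for r
  proof -
    have "indicator {a k<..<d} r = of_bool (a k < r) * (indicator {c<..<d} r :: ennreal)"
      if "k \<in> A" for k
      using range[OF that] by (auto simp: indicator_def)
    then have "(\<Sum>k\<in>A. indicator {a k<..<d} r :: ennreal)
        = (\<Sum>k\<in>A. of_bool (a k < r) * indicator {c<..<d} r)"
      by simp
    also have "\<dots> = of_nat (card {k \<in> A. a k < r}) * indicator {c<..<d} r"
      using \<open>finite A\<close> by (simp add: sum_distrib_right[symmetric] Int_def conj_commute)
    finally show ?thesis ..
  qed
  then have "(\<integral>\<^sup>+r \<in> {c<..<d}. of_nat (card {k \<in> A. a k < r}) \<partial>lborel)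
      = (\<Sum>k\<in>A. emeasure lborel {a k<..<d})"
    by (simp add: nn_integral_sum)
  also have "\<dots> = ennreal (\<Sum>k\<in>A. d - a k)"
    using range by (simp add: sum_ennreal)
  finally show ?thesis .
qed

theorem lemma4p1:
  fixes n :: nat and zs :: "nat \<Rightarrow> complex"
  assumes "\<And>k. k < n \<Longrightarrow> zs k \<in> ball 0 1"
  shows "ennreal (2 * pi * (\<Sum>k<n. 1 - cmod (zs k)))
    \<le> (\<integral>\<^sup>+ z \<in> ball (0::complex) 1. ennreal (cmod (\<Sum>k<n. 1 / (z - zs k))) \<partial>lborel)"
proof -
  define F where "F z = (\<Sum>k<n. 1 / (z - zs k))" for z
  define N where "N r = card {k \<in> {..<n}. cmod (zs k) < r}" for r
  have "(\<integral>\<^sup>+r \<in> {0<..<1}. of_nat (N r) \<partial>lborel) = ennreal (\<Sum>k<n. 1 - cmod (zs k))"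
    unfolding N_def using assms by (intro nn_integral_card_less) (auto simp: less_imp_le)
  then have "ennreal (2 * pi * (\<Sum>k<n. 1 - cmod (zs k)))
      = ennreal (2 * pi) * (\<integral>\<^sup>+r \<in> {0<..<1}. of_nat (N r) \<partial>lborel)"
    by (simp add: ennreal_mult')
  also have "\<dots> = (\<integral>\<^sup>+r \<in> {0<..<1}. ennreal (2 * pi * N r) \<partial>lborel)"
    by (simp add: N_def ennreal_mult' nn_integral_cmult[symmetric] mult.assoc
        flip: ennreal_of_nat_eq_real_of_nat)
  also have "\<dots> \<le> (\<integral>\<^sup>+r \<in> {0<..<1}. ennreal r *
      (\<integral>\<^sup>+\<theta> \<in> {0..2*pi}. ennreal (cmod (F (rcis r \<theta>))) \<partial>lborel) \<partial>lborel)"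
    unfolding N_def F_def by (rule nn_integral_card_inside_circle_le) simp
  also have "\<dots> = (\<integral>\<^sup>+z \<in> ball 0 1. ennreal (cmod (F z)) \<partial>lborel)"
    unfolding F_def by (rule nn_integral_ball_polar[symmetric]) measurable
  finally show ?thesis
    by (simp add: F_def)
qed

end
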